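(* Let $A$ be a finite set. The $\Sigma_A$-spaces $|(R^+(A),\supseteq)|$ and $\mathrm{OConf}(A,\mathbb R^2)=\{f:A\to\mathbb R^2\mid f\text{ injective}\}$ are $\Sigma_A$-homotopy equivalent.
   Context: A strict partial order is a transitive irreflexive relation; it is semi-linear if it is induced by a surjection $h:A\to\{1,\dots,l\}$ (i.e. $a<b$ iff $h(a)<h(b)$). $<_1\bar\cup<_2$ denotes the transitive closure of the union. A double order on $A$ is a pair $(\overset{x}{<},\overset{y}{<})$ of strict partial orders such that any two distinct elements are comparable by $\overset{x}{<}$ or by $\overset{y}{<}$; regular if $\overset{x}{<}$ is semi-linear and $a\overset{x}{<}b$ implies $a,b$ are not $\overset{y}{<}$-comparable; semi-regular if it is the componentwise $\bar\cup$ of finitely many regular double orders. $R^+(A)$ is the set of semi-regular double orders, ordered by $\overset{*}{<}_1\supseteq\overset{*}{<}_2$ iff $\overset{x}{<}_1\supseteq\overset{x}{<}_2$ and $\overset{y}{<}_1\supseteq\overset{y}{<}_2$; $|P|$ is the realization of the nerve of a poset. $\Sigma_A$ acts on $\mathrm{OConf}(A,\mathbb R^2)$ by precomposition and on double orders by $(\overset{x}{<},\overset{y}{<})\sigma=(\overset{x}{<}\sigma,\overset{y}{<}\sigma)$, $a(\overset{x}{<}\sigma)b$ iff $\sigma(a)\overset{x}{<}\sigma(b)$ (similarly for $y$). *)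

theory Defs
  imports "HOL-Analysis.Analysis" "HOL-Combinatorics.Permutations"
begin

type_synonym 'a dorder = "('a \<times> 'a) set \<times> ('a \<times> 'a) set"

definition strict_po :: "'a set \<Rightarrow> ('a \<times> 'a) set \<Rightarrow> bool" where
  "strict_po A r \<longleftrightarrow> r \<subseteq> A \<times> A \<and> trans r \<and> (\<forall>a. (a, a) \<notin> r)"

definition semi_linear :: "'a set \<Rightarrow> ('a \<times> 'a) set \<Rightarrow> bool" where
  "semi_linear A r \<longleftrightarrow>
     (\<exists>(l::nat) h. h ` A = {1..l} \<and> r = {(a, b). a \<in> A \<and> b \<in> A \<and> h a < h b})"

definition double_order :: "'a set \<Rightarrow> 'a dorder \<Rightarrow> bool" where
  "double_order A D \<longleftrightarrow> strict_po A (fst D) \<and> strict_po A (snd D) \<and>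
     (\<forall>a\<in>A. \<forall>b\<in>A. a \<noteq> b \<longrightarrow>
        (a, b) \<in> fst D \<or> (b, a) \<in> fst D \<or> (a, b) \<in> snd D \<or> (b, a) \<in> snd D)"

definition regular_dorder :: "'a set \<Rightarrow> 'a dorder \<Rightarrow> bool" where
  "regular_dorder A D \<longleftrightarrow> double_order A D \<and> semi_linear A (fst D) \<and>
     (\<forall>a b. (a, b) \<in> fst D \<longrightarrow> (a, b) \<notin> snd D \<and> (b, a) \<notin> snd D)"

definition semi_regular :: "'a set \<Rightarrow> 'a dorder \<Rightarrow> bool" where
  "semi_regular A D \<longleftrightarrow> double_order A D \<and>
     (\<exists>F. finite F \<and> (\<forall>E\<in>F. regular_dorder A E) \<and>
          D = ((\<Union>E\<in>F. fst E)\<^sup>+, (\<Union>E\<in>F. snd E)\<^sup>+))"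

definition R_plus :: "'a set \<Rightarrow> 'a dorder set" where
  "R_plus A = {D. semi_regular A D}"

definition dorder_le :: "'a dorder \<Rightarrow> 'a dorder \<Rightarrow> bool" where
  "dorder_le D1 D2 \<longleftrightarrow> fst D2 \<subseteq> fst D1 \<and> snd D2 \<subseteq> snd D1"

text \<open>Geometric realization of the nerve (order complex) of a finite poset (P, le):
  the points are convex combinations of vertices whose support is a chain;
  topology = subspace of the product topology on 'b \<Rightarrow> real.\<close>
definition realization :: "'b set \<Rightarrow> ('b \<Rightarrow> 'b \<Rightarrow> bool) \<Rightarrow> ('b \<Rightarrow> real) set" where
  "realization P le = {t. (\<forall>x. 0 \<le> t x) \<and> (\<forall>x. x \<notin> P \<longrightarrow> t x = 0) \<and> sum t P = 1 \<and>
      (\<forall>x y. 0 < t x \<and> 0 < t y \<longrightarrow> le x y \<or> le y x)}"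

definition OConf :: "'a set \<Rightarrow> ('a \<Rightarrow> real^2) set" where
  "OConf A = {f. inj_on f A \<and> (\<forall>x. x \<notin> A \<longrightarrow> f x = 0)}"

definition rel_act :: "('a \<times> 'a) set \<Rightarrow> ('a \<Rightarrow> 'a) \<Rightarrow> ('a \<times> 'a) set" where
  "rel_act r \<sigma> = {(a, b). (\<sigma> a, \<sigma> b) \<in> r}"

definition dorder_act :: "'a dorder \<Rightarrow> ('a \<Rightarrow> 'a) \<Rightarrow> 'a dorder" where
  "dorder_act D \<sigma> = (rel_act (fst D) \<sigma>, rel_act (snd D) \<sigma>)"

text \<open>Induced action on the realization: the vertex D is sent to D\<sigma>.\<close>
definition realization_act :: "('a dorder \<Rightarrow> real) \<Rightarrow> ('a \<Rightarrow> 'a) \<Rightarrow> ('a dorder \<Rightarrow> real)" where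
  "realization_act t \<sigma> = (\<lambda>E. t (dorder_act E (inv \<sigma>)))"

definition conf_act :: "('a \<Rightarrow> real^2) \<Rightarrow> ('a \<Rightarrow> 'a) \<Rightarrow> ('a \<Rightarrow> real^2)" where
  "conf_act f \<sigma> = f \<circ> \<sigma>"

definition equivariant ::
  "'g set \<Rightarrow> ('x \<Rightarrow> 'g \<Rightarrow> 'x) \<Rightarrow> ('y \<Rightarrow> 'g \<Rightarrow> 'y) \<Rightarrow> 'x topology \<Rightarrow> ('x \<Rightarrow> 'y) \<Rightarrow> bool" where
  "equivariant G actX actY X f \<longleftrightarrow>
     (\<forall>\<sigma>\<in>G. \<forall>x\<in>topspace X. f (actX x \<sigma>) = actY (f x) \<sigma>)"

definition G_homotopy_equivalent ::
  "'g set \<Rightarrow> ('x \<Rightarrow> 'g \<Rightarrow> 'x) \<Rightarrow> ('y \<Rightarrow> 'g \<Rightarrow> 'y) \<Rightarrow> 'x topology \<Rightarrow> 'y topology \<Rightarrow> bool" where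
  "G_homotopy_equivalent G actX actY X Y \<longleftrightarrow>
     (\<exists>f g. continuous_map X Y f \<and> continuous_map Y X g \<and>
        equivariant G actX actY X f \<and> equivariant G actY actX Y g \<and>
        homotopic_with (equivariant G actX actX X) X X (g \<circ> f) id \<and>
        homotopic_with (equivariant G actY actY Y) Y Y (f \<circ> g) id)"

end

theory Submission
  imports Defs
begin

(* A configuration c realizes a double order D with margin e if every relation a < b of the
   x-order (y-order) of D is witnessed by a gap c(b) - c(a) > e in the first (second)
   coordinate. For 0 <= e < max_margin A c, the regular double orders realized with margin e
   generate a semi-regular double order scale_dorder A c e, which shrinks as e grows. Pushing
   the uniform distribution on [0, max_margin A c) forward along e |-> scale_dorder A c e gives a
   point to_nerve A c of a simplex of |R^+(A)| depending continuously on c. Conversely,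
   to_conf A t places a at the t-average of (number of x-predecessors, number of
   y-predecessors) of a; the vertex of the support whose relations are contained in all the
   others is realized with all gaps >= 1, so this is a configuration. Both composites are
   joined to the identity by straight lines: c and to_conf A (to_nerve A c) realize a common
   double order, and t is first reweighted towards the vertices that to_conf A t realizes with
   margin above max_margin; their relations are contained in those of every vertex in the
   support of to_nerve A (to_conf A t).
   Every construction commutes with relabelling A. *)

lemma continuous_on_Min_insert:
  fixes f :: "'i \<Rightarrow> 'x::topological_space \<Rightarrow> 'b::linorder_topology"
  assumes "finite I" "continuous_on S g" "\<And>i. i \<in> I \<Longrightarrow> continuous_on S (f i)"
  shows "continuous_on S (\<lambda>x. Min (insert (g x) ((\<lambda>i. f i x) ` I)))"
  using assms
proof (induction I rule: finite_induct)
  case (insert j I)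
  have "Min (insert (g x) ((\<lambda>i. f i x) ` insert j I))
      = min (f j x) (Min (insert (g x) ((\<lambda>i. f i x) ` I)))" for x
    using insert.hyps by (simp add: insert_commute[of "g x"] Min_insert)
  then show ?case
    using insert by (simp add: continuous_on_min)
qed simp

lemma continuous_on_Max_insert:
  fixes f :: "'i \<Rightarrow> 'x::topological_space \<Rightarrow> 'b::linorder_topology"
  assumes "finite I" "continuous_on S g" "\<And>i. i \<in> I \<Longrightarrow> continuous_on S (f i)"
  shows "continuous_on S (\<lambda>x. Max (insert (g x) ((\<lambda>i. f i x) ` I)))"
  using assms
proof (induction I rule: finite_induct)
  case (insert j I)
  have "Max (insert (g x) ((\<lambda>i. f i x) ` insert j I))
      = max (f j x) (Max (insert (g x) ((\<lambda>i. f i x) ` I)))" for x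
    using insert.hyps by (simp add: insert_commute[of "g x"] Max_insert)
  then show ?case
    using insert by (simp add: continuous_on_max)
qed simp

lemma finite_chain_has_greatest:
  assumes "finite K" "K \<noteq> {}" "transp le" "\<And>x y. x \<in> K \<Longrightarrow> y \<in> K \<Longrightarrow> le x y \<or> le y x"
  shows "\<exists>m\<in>K. \<forall>x\<in>K. le x m"
  using assms
proof (induction K rule: finite_ne_induct)
  case (singleton x)
  then show ?case by blast
next
  case (insert x K)
  then obtain m where m: "m \<in> K" "\<forall>y\<in>K. le y m"
    by auto
  consider "le x m" | "le m x"
    using insert.prems(2) m(1) by blast
  then show ?case
  proof cases
    case 1
    with m show ?thesis
      by blast
  next
    case 2
    moreover have "le x x"
      using insert.prems(2) by blast
    ultimately show ?thesis
      using m(2) transpD[OF insert.prems(1)] by blast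
  qed
qed

lemma homotopic_with_equivariant_segment:
  fixes p q :: "('i \<Rightarrow> 'v::real_normed_vector) \<Rightarrow> 'i \<Rightarrow> 'v"
  assumes act: "\<And>x \<sigma>. act x \<sigma> = x \<circ> \<tau> \<sigma>"
    and cont: "continuous_on S p" "continuous_on S q"
    and equiv: "equivariant G act act (top_of_set S) p" "equivariant G act act (top_of_set S) q"
    and segment: "\<And>x s. x \<in> S \<Longrightarrow> s \<in> {0..1} \<Longrightarrow> (\<lambda>i. (1 - s) *\<^sub>R p x i + s *\<^sub>R q x i) \<in> S"
  shows "homotopic_with (equivariant G act act (top_of_set S)) (top_of_set S) (top_of_set S) p q"
  unfolding homotopic_with_def
proof (intro exI conjI allI ballI)
  let ?h = "\<lambda>z::real \<times> ('i \<Rightarrow> 'v). \<lambda>i. (1 - fst z) *\<^sub>R p (snd z) i + fst z *\<^sub>R q (snd z) i"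
  have "continuous_on ({0..1} \<times> S) ?h"
  proof (intro continuous_on_coordinatewise_then_product continuous_intros)
    fix i
    show "continuous_on ({0..1} \<times> S) (\<lambda>z. p (snd z) i)"
      by (rule continuous_on_compose2[of S "\<lambda>x. p x i"])
         (auto intro: continuous_on_product_then_coordinatewise[OF cont(1)] continuous_intros)
    show "continuous_on ({0..1} \<times> S) (\<lambda>z. q (snd z) i)"
      by (rule continuous_on_compose2[of S "\<lambda>x. q x i"])
         (auto intro: continuous_on_product_then_coordinatewise[OF cont(2)] continuous_intros)
  qed
  then show "continuous_map (prod_topology (top_of_set {0..1}) (top_of_set S)) (top_of_set S) ?h"
    using segment by auto
  show "?h (0, x) = p x" "?h (1, x) = q x" for x
    by auto
  show "equivariant G act act (top_of_set S) (\<lambda>x. ?h (s, x))" for s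
    using equiv unfolding equivariant_def act by (simp add: fun_eq_iff)
qed

section \<open>Double orders\<close>

definition dorder_rel :: "'a dorder \<Rightarrow> 2 \<Rightarrow> ('a \<times> 'a) set" where
  "dorder_rel D i = (if i = 1 then fst D else snd D)"

lemma dorder_rel_simps [simp]: "dorder_rel D 1 = fst D" "dorder_rel D 2 = snd D"
  by (simp_all add: dorder_rel_def)

lemma dorder_le_iff_rel: "dorder_le D E \<longleftrightarrow> (\<forall>i. dorder_rel E i \<subseteq> dorder_rel D i)"
  by (simp add: dorder_le_def forall_2)

lemma dorder_le_refl [simp]: "dorder_le D D"
  by (simp add: dorder_le_def)

lemma transp_dorder_le: "transp dorder_le"
  by (auto simp: transp_def dorder_le_def)

lemma dorder_le_antisym: "dorder_le D E \<Longrightarrow> dorder_le E D \<Longrightarrow> D = E"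
  by (auto simp: dorder_le_def prod_eq_iff)

lemma double_order_strict_po: "double_order A D \<Longrightarrow> strict_po A (dorder_rel D i)"
  by (simp add: double_order_def dorder_rel_def)

lemma double_order_total:
  "double_order A D \<Longrightarrow> a \<in> A \<Longrightarrow> b \<in> A \<Longrightarrow> a \<noteq> b \<Longrightarrow>
     \<exists>i. (a, b) \<in> dorder_rel D i \<or> (b, a) \<in> dorder_rel D i"
  unfolding double_order_def by (metis dorder_rel_simps)

lemma double_order_subset: "double_order A D \<Longrightarrow> dorder_rel D i \<subseteq> A \<times> A"
  using double_order_strict_po[of A D i] by (simp add: strict_po_def)

lemma finite_dorder_rel:
  assumes "finite A" "double_order A D"
  shows "finite (dorder_rel D i)"
  using finite_subset[OF double_order_subset[OF assms(2)]] assms(1) by simp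

lemma finite_double_orders: "finite A \<Longrightarrow> finite {D. double_order A D}"
proof (rule finite_subset)
  show "{D. double_order A D} \<subseteq> Pow (A \<times> A) \<times> Pow (A \<times> A)"
  proof
    fix D
    assume "D \<in> {D. double_order A D}"
    then have "fst D \<subseteq> A \<times> A" "snd D \<subseteq> A \<times> A"
      using double_order_subset[of A D 1] double_order_subset[of A D 2] by simp_all
    then show "D \<in> Pow (A \<times> A) \<times> Pow (A \<times> A)"
      by (simp add: mem_Times_iff)
  qed
qed simp

abbreviation regular_dorders :: "'a set \<Rightarrow> 'a dorder set" where
  "regular_dorders A \<equiv> {E. regular_dorder A E}"

lemma finite_regular_dorders: "finite A \<Longrightarrow> finite (regular_dorders A)"
  by (rule finite_subset[OF _ finite_double_orders]) (auto simp: regular_dorder_def)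

lemma finite_R_plus: "finite A \<Longrightarrow> finite (R_plus A)"
  by (rule finite_subset[OF _ finite_double_orders]) (auto simp: R_plus_def semi_regular_def)

lemma R_plus_double_order: "D \<in> R_plus A \<Longrightarrow> double_order A D"
  by (simp add: R_plus_def semi_regular_def)

definition dorder_join :: "'a dorder set \<Rightarrow> 'a dorder" where
  "dorder_join S = ((\<Union>E\<in>S. fst E)\<^sup>+, (\<Union>E\<in>S. snd E)\<^sup>+)"

lemma dorder_rel_join: "dorder_rel (dorder_join S) i = (\<Union>E\<in>S. dorder_rel E i)\<^sup>+"
  by (simp add: dorder_join_def dorder_rel_def)

lemma dorder_join_le: "E \<in> S \<Longrightarrow> dorder_le (dorder_join S) E"
  by (auto simp: dorder_le_def dorder_join_def)

lemma dorder_join_antimono: "S \<subseteq> S' \<Longrightarrow> dorder_le (dorder_join S') (dorder_join S)"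
  unfolding dorder_le_def dorder_join_def fst_conv snd_conv by (intro conjI trancl_mono_subset) auto

lemma R_plus_iff_join:
  "D \<in> R_plus A \<longleftrightarrow>
     double_order A D \<and> (\<exists>F. finite F \<and> F \<subseteq> regular_dorders A \<and> D = dorder_join F)"
  by (simp add: R_plus_def semi_regular_def dorder_join_def subset_eq)

section \<open>The action of permutations\<close>

lemma rel_act_comp: "rel_act (rel_act r \<sigma>) \<tau> = rel_act r (\<sigma> \<circ> \<tau>)"
  by (auto simp: rel_act_def)

lemma rel_act_id [simp]: "rel_act r id = r"
  by (auto simp: rel_act_def)

lemma dorder_act_comp: "dorder_act (dorder_act D \<sigma>) \<tau> = dorder_act D (\<sigma> \<circ> \<tau>)"
  by (simp add: dorder_act_def rel_act_comp)

lemma dorder_act_id [simp]: "dorder_act D id = D"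
  by (simp add: dorder_act_def)

lemma dorder_act_inv_cancel: "bij \<sigma> \<Longrightarrow> dorder_act (dorder_act D \<sigma>) (inv \<sigma>) = D"
  by (simp add: dorder_act_comp surj_iff[THEN iffD1, OF bij_is_surj])

lemma dorder_act_cancel_inv: "bij \<sigma> \<Longrightarrow> dorder_act (dorder_act D (inv \<sigma>)) \<sigma> = D"
  by (simp add: dorder_act_comp bij_is_inj inv_o_cancel)

lemma dorder_act_inj: "bij \<sigma> \<Longrightarrow> dorder_act D \<sigma> = dorder_act E \<sigma> \<longleftrightarrow> D = E"
  by (metis dorder_act_inv_cancel)

lemma dorder_rel_act: "dorder_rel (dorder_act D \<sigma>) i = rel_act (dorder_rel D i) \<sigma>"
  by (simp add: dorder_act_def dorder_rel_def)

lemma dorder_le_act_iff: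
  assumes "surj \<sigma>"
  shows "dorder_le (dorder_act D \<sigma>) (dorder_act E \<sigma>) \<longleftrightarrow> dorder_le D E"
proof -
  have "rel_act r \<sigma> \<subseteq> rel_act r' \<sigma> \<longleftrightarrow> r \<subseteq> r'" for r r'
  proof
    assume sub: "rel_act r \<sigma> \<subseteq> rel_act r' \<sigma>"
    show "r \<subseteq> r'"
    proof clarify
      fix x y
      assume "(x, y) \<in> r"
      moreover obtain a b where "x = \<sigma> a" "y = \<sigma> b"
        using assms by (metis surjD)
      ultimately show "(x, y) \<in> r'"
        using sub by (auto simp: rel_act_def)
    qed
  qed (auto simp: rel_act_def)
  then show ?thesis
    by (simp add: dorder_le_def dorder_act_def)
qed

lemma strict_po_rel_act: "\<sigma> permutes A \<Longrightarrow> strict_po A r \<Longrightarrow> strict_po A (rel_act r \<sigma>)"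
  unfolding strict_po_def rel_act_def by (auto simp: permutes_in_image trans_def)

lemma double_order_act:
  assumes \<sigma>: "\<sigma> permutes A" and D: "double_order A D"
  shows "double_order A (dorder_act D \<sigma>)"
proof -
  have "strict_po A (rel_act (fst D) \<sigma>)" "strict_po A (rel_act (snd D) \<sigma>)"
    using D by (auto simp: double_order_def intro: strict_po_rel_act[OF \<sigma>])
  moreover have "\<sigma> a \<in> A" "\<sigma> b \<in> A" "\<sigma> a \<noteq> \<sigma> b" if "a \<in> A" "b \<in> A" "a \<noteq> b" for a b
    using that permutes_in_image[OF \<sigma>] permutes_inj[OF \<sigma>] by (auto dest: injD)
  ultimately show ?thesis
    using D unfolding double_order_def dorder_act_def rel_act_def by auto
qed

lemma semi_linear_act:
  assumes \<sigma>: "\<sigma> permutes A" and r: "semi_linear A r"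
  shows "semi_linear A (rel_act r \<sigma>)"
proof -
  obtain l :: nat and h where h: "h ` A = {1..l}" "r = {(a, b). a \<in> A \<and> b \<in> A \<and> h a < h b}"
    using r unfolding semi_linear_def by blast
  have "(h \<circ> \<sigma>) ` A = {1..l}"
    by (metis image_comp permutes_image[OF \<sigma>] h(1))
  moreover have "rel_act r \<sigma> = {(a, b). a \<in> A \<and> b \<in> A \<and> (h \<circ> \<sigma>) a < (h \<circ> \<sigma>) b}"
    using h(2) by (auto simp: rel_act_def permutes_in_image[OF \<sigma>])
  ultimately show ?thesis
    unfolding semi_linear_def by blast
qed

lemma regular_dorder_act:
  assumes \<sigma>: "\<sigma> permutes A" and E: "regular_dorder A E"
  shows "regular_dorder A (dorder_act E \<sigma>)"
proof -
  have "double_order A (dorder_act E \<sigma>)" "semi_linear A (fst (dorder_act E \<sigma>))"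
    using E double_order_act[OF \<sigma>] semi_linear_act[OF \<sigma>]
    by (auto simp: regular_dorder_def dorder_act_def)
  moreover have "(a, b) \<notin> snd (dorder_act E \<sigma>) \<and> (b, a) \<notin> snd (dorder_act E \<sigma>)"
    if "(a, b) \<in> fst (dorder_act E \<sigma>)" for a b
    using E that by (simp add: regular_dorder_def dorder_act_def rel_act_def)
  ultimately show ?thesis
    by (simp add: regular_dorder_def)
qed

lemma trancl_rel_act:
  assumes "bij \<sigma>"
  shows "(rel_act r \<sigma>)\<^sup>+ = rel_act (r\<^sup>+) \<sigma>"
proof (intro set_eqI iffI; clarify)
  fix a b
  assume "(a, b) \<in> (rel_act r \<sigma>)\<^sup>+"
  then show "(a, b) \<in> rel_act (r\<^sup>+) \<sigma>"
    by (induction rule: trancl_induct) (auto simp: rel_act_def intro: trancl_into_trancl)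
next
  have inv: "\<sigma> (inv \<sigma> x) = x" for x
    using assms by (simp add: bij_is_surj surj_f_inv_f)
  have "(inv \<sigma> x, inv \<sigma> y) \<in> (rel_act r \<sigma>)\<^sup>+" if "(x, y) \<in> r\<^sup>+" for x y
    using that
  proof (induction rule: trancl_induct)
    case (base y)
    then show ?case by (auto simp: rel_act_def inv)
  next
    case (step y z)
    then have "(inv \<sigma> y, inv \<sigma> z) \<in> rel_act r \<sigma>"
      by (simp add: rel_act_def inv)
    with step.IH show ?case
      by (rule trancl_into_trancl)
  qed
  moreover fix a b
  assume "(a, b) \<in> rel_act (r\<^sup>+) \<sigma>"
  ultimately show "(a, b) \<in> (rel_act r \<sigma>)\<^sup>+"
    using assms by (force simp: rel_act_def bij_is_inj)
qed

lemma dorder_join_act: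
  "bij \<sigma> \<Longrightarrow> dorder_join ((\<lambda>E. dorder_act E \<sigma>) ` S) = dorder_act (dorder_join S) \<sigma>"
proof -
  assume "bij \<sigma>"
  moreover have "(\<Union>E\<in>S. rel_act (f E) \<sigma>) = rel_act (\<Union>E\<in>S. f E) \<sigma>" for f :: "'a dorder \<Rightarrow> _"
    by (auto simp: rel_act_def)
  ultimately show ?thesis
    by (simp add: dorder_join_def dorder_act_def trancl_rel_act)
qed

lemma R_plus_act:
  assumes \<sigma>: "\<sigma> permutes A" and D: "D \<in> R_plus A"
  shows "dorder_act D \<sigma> \<in> R_plus A"
proof -
  obtain F where F: "finite F" "F \<subseteq> regular_dorders A" "D = dorder_join F"
    using D by (auto simp: R_plus_iff_join)
  show ?thesis
    unfolding R_plus_iff_join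
  proof (intro conjI exI)
    show "double_order A (dorder_act D \<sigma>)"
      using double_order_act[OF \<sigma> R_plus_double_order[OF D]] .
    show "finite ((\<lambda>E. dorder_act E \<sigma>) ` F)"
      using F(1) by simp
    show "(\<lambda>E. dorder_act E \<sigma>) ` F \<subseteq> regular_dorders A"
      using F(2) regular_dorder_act[OF \<sigma>] by auto
    show "dorder_act D \<sigma> = dorder_join ((\<lambda>E. dorder_act E \<sigma>) ` F)"
      by (simp add: F(3) dorder_join_act[OF permutes_bij[OF \<sigma>]])
  qed
qed

lemma regular_dorders_act: "\<sigma> permutes A \<Longrightarrow> E \<in> regular_dorders A \<Longrightarrow> dorder_act E \<sigma> \<in> regular_dorders A"
  by (simp add: regular_dorder_act)

lemma dorder_act_mem_iff:
  assumes closed: "\<And>\<sigma> D. \<sigma> permutes A \<Longrightarrow> D \<in> X \<Longrightarrow> dorder_act D \<sigma> \<in> X" and \<sigma>: "\<sigma> permutes A"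
  shows "dorder_act D \<sigma> \<in> X \<longleftrightarrow> D \<in> X"
proof
  assume "dorder_act D \<sigma> \<in> X"
  then have "dorder_act (dorder_act D \<sigma>) (inv \<sigma>) \<in> X"
    by (rule closed[OF permutes_inv[OF \<sigma>]])
  then show "D \<in> X"
    by (simp add: dorder_act_inv_cancel[OF permutes_bij[OF \<sigma>]])
qed (rule closed[OF \<sigma>])

lemma dorder_act_image_eq:
  assumes closed: "\<And>\<sigma> D. \<sigma> permutes A \<Longrightarrow> D \<in> X \<Longrightarrow> dorder_act D \<sigma> \<in> X" and \<sigma>: "\<sigma> permutes A"
  shows "(\<lambda>D. dorder_act D \<sigma>) ` X = X"
proof (rule subset_antisym)
  show "(\<lambda>D. dorder_act D \<sigma>) ` X \<subseteq> X"
    by (rule image_subsetI) (rule closed[OF \<sigma>])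
  show "X \<subseteq> (\<lambda>D. dorder_act D \<sigma>) ` X"
  proof
    fix D
    assume "D \<in> X"
    then have "dorder_act D (inv \<sigma>) \<in> X"
      by (rule closed[OF permutes_inv[OF \<sigma>]])
    then show "D \<in> (\<lambda>D. dorder_act D \<sigma>) ` X"
      by (rule rev_image_eqI) (simp add: dorder_act_cancel_inv[OF permutes_bij[OF \<sigma>]])
  qed
qed

lemma sum_dorder_act:
  assumes "\<And>\<sigma> D. \<sigma> permutes A \<Longrightarrow> D \<in> X \<Longrightarrow> dorder_act D \<sigma> \<in> X" and \<sigma>: "\<sigma> permutes A"
  shows "(\<Sum>D\<in>X. h (dorder_act D \<sigma>)) = (\<Sum>D\<in>X. h D)"
proof -
  have "inj_on (\<lambda>D. dorder_act D \<sigma>) X"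
    by (rule inj_onI) (simp add: dorder_act_inj[OF permutes_bij[OF \<sigma>]])
  from sum.reindex[OF this, of h]
  have "(\<Sum>D\<in>X. h (dorder_act D \<sigma>)) = sum h ((\<lambda>D. dorder_act D \<sigma>) ` X)"
    unfolding comp_def by (rule sym)
  also have "\<dots> = sum h X"
    by (simp only: dorder_act_image_eq[OF assms])
  finally show ?thesis .
qed

section \<open>Realizing double orders by configurations\<close>

definition gap :: "('a \<Rightarrow> real^2) \<Rightarrow> 2 \<Rightarrow> 'a \<Rightarrow> 'a \<Rightarrow> real" where
  "gap c i a b = c b $ i - c a $ i"

definition realizes :: "('a \<Rightarrow> real^2) \<Rightarrow> real \<Rightarrow> 'a dorder \<Rightarrow> bool" where
  "realizes c e D \<longleftrightarrow> (\<forall>i. \<forall>(a, b) \<in> dorder_rel D i. e < gap c i a b)"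

lemma realizes_antimono: "realizes c e D \<Longrightarrow> e' \<le> e \<Longrightarrow> realizes c e' D"
  unfolding realizes_def by fastforce

lemma gap_trancl_gt:
  assumes "0 \<le> e" "\<And>a b. (a, b) \<in> r \<Longrightarrow> e < gap c i a b" "(a, b) \<in> r\<^sup>+"
  shows "e < gap c i a b"
  using assms(3)
proof (induction rule: trancl_induct)
  case (base b)
  then show ?case by (rule assms(2))
next
  case (step b d)
  have "gap c i a d = gap c i a b + gap c i b d"
    by (simp add: gap_def)
  with step.IH assms(1) assms(2)[OF step.hyps(2)] show ?case
    by linarith
qed

lemma realizes_dorder_join:
  assumes "0 \<le> e" "\<And>E. E \<in> S \<Longrightarrow> realizes c e E"
  shows "realizes c e (dorder_join S)"
  unfolding realizes_def dorder_rel_join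
proof (intro allI ballI, clarify)
  fix i a b
  assume ab: "(a, b) \<in> (\<Union>E\<in>S. dorder_rel E i)\<^sup>+"
  have "e < gap c i x y" if xy: "(x, y) \<in> (\<Union>E\<in>S. dorder_rel E i)" for x y
  proof -
    obtain E where "E \<in> S" "(x, y) \<in> dorder_rel E i"
      using xy by blast
    with assms(2) show ?thesis
      by (fastforce simp: realizes_def)
  qed
  then show "e < gap c i a b"
    using ab by (rule gap_trancl_gt[OF assms(1)])
qed

lemma dorder_join_in_R_plus:
  assumes S: "finite S" "S \<noteq> {}" "S \<subseteq> regular_dorders A"
    and realized: "\<And>E. E \<in> S \<Longrightarrow> realizes c 0 E"
  shows "dorder_join S \<in> R_plus A"
proof -
  obtain E where E: "E \<in> S"
    using S(2) by blast
  have E_double: "double_order A E"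
    using E S(3) by (auto simp: regular_dorder_def)
  have join_realized: "realizes c 0 (dorder_join S)"
    by (rule realizes_dorder_join) (simp_all add: realized)
  have strict: "strict_po A (dorder_rel (dorder_join S) i)" for i
    unfolding strict_po_def
  proof (intro conjI allI)
    have "(\<Union>E\<in>S. dorder_rel E i) \<subseteq> A \<times> A"
      using S(3) double_order_subset by (force simp: regular_dorder_def)
    then show "dorder_rel (dorder_join S) i \<subseteq> A \<times> A"
      by (simp add: dorder_rel_join trancl_subset_Sigma)
    show "trans (dorder_rel (dorder_join S) i)"
      by (simp add: dorder_rel_join)
    show "(a, a) \<notin> dorder_rel (dorder_join S) i" for a
      using join_realized by (auto simp: realizes_def gap_def)
  qed
  have "double_order A (dorder_join S)"
    unfolding double_order_def
  proof (intro conjI ballI impI)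
    show "strict_po A (fst (dorder_join S))" "strict_po A (snd (dorder_join S))"
      using strict[of 1] strict[of 2] by simp_all
    fix a b
    assume "a \<in> A" "b \<in> A" "a \<noteq> b"
    then show "(a, b) \<in> fst (dorder_join S) \<or> (b, a) \<in> fst (dorder_join S) \<or>
        (a, b) \<in> snd (dorder_join S) \<or> (b, a) \<in> snd (dorder_join S)"
      using E_double dorder_join_le[OF E] unfolding double_order_def dorder_le_def by blast
  qed
  with S show ?thesis
    unfolding R_plus_iff_join by blast
qed

lemma OConf_if_realizes:
  assumes D: "double_order A D" and realized: "realizes c 0 D" and zero: "\<And>x. x \<notin> A \<Longrightarrow> c x = 0"
  shows "c \<in> OConf A"
  unfolding OConf_def
proof (intro CollectI conjI inj_onI allI impI zero)
  fix a b
  assume ab: "a \<in> A" "b \<in> A" "c a = c b"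
  show "a = b"
  proof (rule ccontr)
    assume "a \<noteq> b"
    then obtain i where "(a, b) \<in> dorder_rel D i \<or> (b, a) \<in> dorder_rel D i"
      using double_order_total[OF D ab(1,2)] by blast
    then have "0 < gap c i a b \<or> 0 < gap c i b a"
      using realized by (auto simp: realizes_def)
    with ab(3) show False
      by (auto simp: gap_def)
  qed
qed

lemma realizes_segment:
  assumes "realizes c e D" "realizes c' e D" "s \<in> {0..1}"
  shows "realizes (\<lambda>x. (1 - s) *\<^sub>R c x + s *\<^sub>R c' x) e D"
  unfolding realizes_def
proof (intro allI ballI, clarify)
  fix i a b
  assume "(a, b) \<in> dorder_rel D i"
  then have "e < gap c i a b" "e < gap c' i a b"
    using assms(1,2) by (auto simp: realizes_def)
  then have "e < min (gap c i a b) (gap c' i a b)"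
    by simp
  also have "\<dots> = (1 - s) * min (gap c i a b) (gap c' i a b) + s * min (gap c i a b) (gap c' i a b)"
    by (simp add: algebra_simps)
  also have "\<dots> \<le> (1 - s) * gap c i a b + s * gap c' i a b"
    using assms(3) by (intro add_mono mult_left_mono) auto
  also have "\<dots> = gap (\<lambda>x. (1 - s) *\<^sub>R c x + s *\<^sub>R c' x) i a b"
    by (simp add: gap_def algebra_simps)
  finally show "e < gap (\<lambda>x. (1 - s) *\<^sub>R c x + s *\<^sub>R c' x) i a b" .
qed

lemma semi_linear_less_on:
  fixes f :: "'a \<Rightarrow> 'b::linorder"
  assumes "finite A"
  shows "semi_linear A {(a, b). a \<in> A \<and> b \<in> A \<and> f a < f b}"
proof -
  define X where "X = f ` A"
  define k where "k v = card {w \<in> X. w \<le> v}" for v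
  have fin: "finite X"
    using assms by (simp add: X_def)
  have k_less: "k v < k v'" if "v < v'" "v' \<in> X" for v v'
  proof -
    have "{w \<in> X. w \<le> v} \<subseteq> {w \<in> X. w \<le> v'}" "v' \<in> {w \<in> X. w \<le> v'}" "v' \<notin> {w \<in> X. w \<le> v}"
      using that by auto
    then have "{w \<in> X. w \<le> v} \<subset> {w \<in> X. w \<le> v'}"
      by blast
    then show ?thesis
      unfolding k_def using fin by (simp add: psubset_card_mono)
  qed
  have k_mono: "k v \<le> k v'" if "v \<le> v'" for v v'
    unfolding k_def using that fin by (intro card_mono) auto
  have "inj_on k X"
    by (rule inj_onI) (metis k_less less_irrefl linorder_neqE)
  moreover have "k ` X \<subseteq> {1..card X}"
  proof
    fix n
    assume "n \<in> k ` X"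
    then obtain v where v: "v \<in> X" "n = k v"
      by blast
    have "{v} \<subseteq> {w \<in> X. w \<le> v}" "{w \<in> X. w \<le> v} \<subseteq> X"
      using v(1) by auto
    then show "n \<in> {1..card X}"
      using v(2) fin card_mono[OF _ \<open>{v} \<subseteq> _\<close>] card_mono[OF fin] by (simp add: k_def)
  qed
  ultimately have "k ` X = {1..card X}"
    by (intro card_subset_eq) (simp_all add: card_image)
  then have "(k \<circ> f) ` A = {1..card X}"
    by (simp add: X_def image_comp)
  moreover have "(k \<circ> f) a < (k \<circ> f) b \<longleftrightarrow> f a < f b" if "b \<in> A" for a b
    using k_less k_mono that by (auto simp: X_def not_less[symmetric] intro: leI)
  ultimately show ?thesis
    unfolding semi_linear_def
    by (intro exI[of _ "card X"] exI[of _ "k \<circ> f"]) auto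
qed

lemma regular_dorder_realized:
  assumes fin: "finite A" and c: "c \<in> OConf A"
  shows "\<exists>E. regular_dorder A E \<and> realizes c 0 E"
proof -
  define E where "E = ({(a, b). a \<in> A \<and> b \<in> A \<and> c a $ 1 < c b $ 1},
                      {(a, b). a \<in> A \<and> b \<in> A \<and> c a $ 1 = c b $ 1 \<and> c a $ 2 < c b $ 2})"
  have total: "(a, b) \<in> fst E \<or> (b, a) \<in> fst E \<or> (a, b) \<in> snd E \<or> (b, a) \<in> snd E"
    if "a \<in> A" "b \<in> A" "a \<noteq> b" for a b
  proof -
    have "c a \<noteq> c b"
      using c that by (auto simp: OConf_def dest: inj_onD)
    then have "c a $ 1 \<noteq> c b $ 1 \<or> c a $ 2 \<noteq> c b $ 2"
      by (simp add: vec_eq_iff forall_2)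
    then show ?thesis
      using that unfolding E_def by auto
  qed
  have "strict_po A (fst E)" "strict_po A (snd E)"
    unfolding strict_po_def E_def by (auto simp: trans_def)
  with total have "double_order A E"
    by (simp add: double_order_def)
  moreover have "semi_linear A (fst E)"
    unfolding E_def fst_conv by (rule semi_linear_less_on[OF fin])
  ultimately have "regular_dorder A E"
    by (auto simp: regular_dorder_def E_def)
  moreover have "realizes c 0 E"
    by (auto simp: realizes_def E_def gap_def forall_2)
  ultimately show ?thesis
    by blast
qed

definition margin :: "'a dorder \<Rightarrow> ('a \<Rightarrow> real^2) \<Rightarrow> real" where
  "margin D c = Min (insert 1 ((\<lambda>(i, a, b). gap c i a b) ` (SIGMA i:UNIV. dorder_rel D i)))"

lemma finite_Sigma_dorder_rel:
  "(\<And>i. finite (dorder_rel D i)) \<Longrightarrow> finite (SIGMA i:UNIV. dorder_rel D i)"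
  by (simp add: finite_SigmaI)

lemma less_margin_iff:
  assumes "\<And>i. finite (dorder_rel D i)" "e < 1"
  shows "e < margin D c \<longleftrightarrow> realizes c e D"
  using assms finite_Sigma_dorder_rel[of D]
  by (auto simp: margin_def realizes_def Min_gr_iff)

lemma margin_ge:
  assumes "\<And>i. finite (dorder_rel D i)" "k \<le> 1"
    and "\<And>i a b. (a, b) \<in> dorder_rel D i \<Longrightarrow> k \<le> gap c i a b"
  shows "k \<le> margin D c"
  using assms finite_Sigma_dorder_rel[of D] by (auto simp: margin_def Min_ge_iff)

lemma margin_antimono:
  assumes "dorder_le D' D" "\<And>i. finite (dorder_rel D' i)"
  shows "margin D' c \<le> margin D c"
  unfolding margin_def
proof (rule Min_antimono)
  show "insert 1 ((\<lambda>(i, a, b). gap c i a b) ` (SIGMA i:UNIV. dorder_rel D i))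
      \<subseteq> insert 1 ((\<lambda>(i, a, b). gap c i a b) ` (SIGMA i:UNIV. dorder_rel D' i))"
    using assms(1) unfolding dorder_le_iff_rel by (intro insert_mono image_mono Sigma_mono) auto
qed (use finite_Sigma_dorder_rel[OF assms(2)] in auto)

lemma continuous_on_gap: "continuous_on S (\<lambda>c. gap c i a b)"
  unfolding gap_def
  by (intro continuous_intros continuous_on_compose2[OF continuous_on_component
        continuous_on_product_then_coordinatewise[OF continuous_on_id]]) auto

lemma continuous_on_margin:
  assumes "\<And>i. finite (dorder_rel D i)"
  shows "continuous_on S (margin D)"
proof -
  have "continuous_on S (\<lambda>c. Min (insert 1 ((\<lambda>j. (\<lambda>(i, a, b) c. gap c i a b) j c) `
           (SIGMA i:UNIV. dorder_rel D i))))"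
    by (rule continuous_on_Min_insert)
       (auto simp: finite_Sigma_dorder_rel[OF assms] continuous_on_gap split: prod.split)
  then show ?thesis
    by (simp add: margin_def[abs_def] case_prod_beta)
qed

lemma margin_act:
  assumes "bij \<sigma>"
  shows "margin (dorder_act D \<sigma>) (c \<circ> \<sigma>) = margin D c"
proof -
  have inv: "\<sigma> (inv \<sigma> x) = x" for x
    using assms by (simp add: bij_is_surj surj_f_inv_f)
  have "(\<lambda>(i, a, b). gap (c \<circ> \<sigma>) i a b) ` (SIGMA i:UNIV. dorder_rel (dorder_act D \<sigma>) i)
      = (\<lambda>(i, a, b). gap c i a b) ` (SIGMA i:UNIV. dorder_rel D i)"
  proof (intro subset_antisym subsetI)
    fix v
    assume "v \<in> (\<lambda>(i, a, b). gap (c \<circ> \<sigma>) i a b) ` (SIGMA i:UNIV. dorder_rel (dorder_act D \<sigma>) i)"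
    then obtain i a b where "(\<sigma> a, \<sigma> b) \<in> dorder_rel D i" "v = gap c i (\<sigma> a) (\<sigma> b)"
      by (auto simp: dorder_rel_act rel_act_def gap_def)
    then show "v \<in> (\<lambda>(i, a, b). gap c i a b) ` (SIGMA i:UNIV. dorder_rel D i)"
      by (auto intro: rev_image_eqI[of "(i, \<sigma> a, \<sigma> b)"])
  next
    fix v
    assume "v \<in> (\<lambda>(i, a, b). gap c i a b) ` (SIGMA i:UNIV. dorder_rel D i)"
    then obtain i a b where "(a, b) \<in> dorder_rel D i" "v = gap c i a b"
      by auto
    then show "v \<in> (\<lambda>(i, a, b). gap (c \<circ> \<sigma>) i a b) ` (SIGMA i:UNIV. dorder_rel (dorder_act D \<sigma>) i)"
      by (intro rev_image_eqI[of "(i, inv \<sigma> a, inv \<sigma> b)"])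
         (simp_all add: dorder_rel_act rel_act_def gap_def inv)
  qed
  then show ?thesis
    by (simp add: margin_def)
qed

section \<open>From configurations to the nerve\<close>

definition normalized_on :: "'b set \<Rightarrow> ('b \<Rightarrow> real) \<Rightarrow> 'b \<Rightarrow> real" where
  "normalized_on P w = (\<lambda>x. if x \<in> P then w x / sum w P else 0)"

lemma normalized_on_pos_iff:
  assumes "0 < sum w P"
  shows "0 < normalized_on P w x \<longleftrightarrow> x \<in> P \<and> 0 < w x"
  using assms by (simp add: normalized_on_def zero_less_divide_iff)

lemma normalized_on_in_realization:
  assumes "\<And>x. x \<in> P \<Longrightarrow> 0 \<le> w x" "0 < sum w P"
    and chain: "\<And>x y. x \<in> P \<Longrightarrow> y \<in> P \<Longrightarrow> 0 < w x \<Longrightarrow> 0 < w y \<Longrightarrow> le x y \<or> le y x"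
  shows "normalized_on P w \<in> realization P le"
  unfolding realization_def
proof (intro CollectI conjI allI impI)
  fix x
  show "0 \<le> normalized_on P w x"
    using assms(1,2) by (simp add: normalized_on_def)
  show "x \<notin> P \<Longrightarrow> normalized_on P w x = 0"
    by (simp add: normalized_on_def)
next
  show "sum (normalized_on P w) P = 1"
    using assms(2) by (simp add: normalized_on_def sum_divide_distrib[symmetric])
next
  fix x y
  assume "0 < normalized_on P w x \<and> 0 < normalized_on P w y"
  then show "le x y \<or> le y x"
    using chain by (simp add: normalized_on_pos_iff[OF assms(2)])
qed

lemma continuous_on_normalized_on:
  assumes "\<And>x. x \<in> P \<Longrightarrow> continuous_on S (\<lambda>s. w s x)" "\<And>s. s \<in> S \<Longrightarrow> 0 < sum (w s) P"
  shows "continuous_on S (\<lambda>s. normalized_on P (w s))"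
proof (rule continuous_on_coordinatewise_then_product)
  fix x
  show "continuous_on S (\<lambda>s. normalized_on P (w s) x)"
  proof (cases "x \<in> P")
    case True
    have "continuous_on S (\<lambda>s. w s x / sum (w s) P)"
      using assms True by (intro continuous_intros) (auto simp: less_le)
    with True show ?thesis
      by (simp add: normalized_on_def)
  qed (simp add: normalized_on_def)
qed

lemma normalized_on_R_plus_act:
  assumes \<sigma>: "\<sigma> permutes A" and w: "\<And>D. w' (dorder_act D \<sigma>) = w D"
  shows "normalized_on (R_plus A) w' = realization_act (normalized_on (R_plus A) w) \<sigma>"
proof
  fix E
  define D where "D = dorder_act E (inv \<sigma>)"
  have E: "E = dorder_act D \<sigma>"
    by (simp add: D_def dorder_act_cancel_inv[OF permutes_bij[OF \<sigma>]])
  have "sum w' (R_plus A) = sum w (R_plus A)"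
    using sum_dorder_act[OF R_plus_act \<sigma>, where h = w'] by (simp add: w)
  then show "normalized_on (R_plus A) w' E = realization_act (normalized_on (R_plus A) w) \<sigma> E"
    unfolding realization_act_def D_def[symmetric] E
    by (simp add: normalized_on_def w dorder_act_mem_iff[OF R_plus_act \<sigma>]
        dorder_act_inv_cancel[OF permutes_bij[OF \<sigma>]])
qed

text \<open>The cap \<open>1/2\<close> keeps \<open>max_margin\<close> strictly below the margin \<open>1\<close> with which \<open>to_conf\<close>
  realizes a vertex of its support (\<open>to_conf_support_greatest\<close>); \<open>reweight\<close> needs this.\<close>

definition max_margin :: "'a set \<Rightarrow> ('a \<Rightarrow> real^2) \<Rightarrow> real" where
  "max_margin A c = min (1/2) (Max (insert 0 ((\<lambda>E. margin E c) ` regular_dorders A)))"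

definition scale_dorder :: "'a set \<Rightarrow> ('a \<Rightarrow> real^2) \<Rightarrow> real \<Rightarrow> 'a dorder" where
  "scale_dorder A c e = dorder_join {E \<in> regular_dorders A. e < margin E c}"

definition threshold :: "'a set \<Rightarrow> ('a \<Rightarrow> real^2) \<Rightarrow> 'a dorder \<Rightarrow> real" where
  "threshold A c D = Max (insert 0 ((\<lambda>S. Min (insert (max_margin A c) ((\<lambda>E. margin E c) ` S))) `
     {S. S \<subseteq> regular_dorders A \<and> dorder_le (dorder_join S) D}))"

text \<open>By \<open>less_threshold_iff\<close> and \<open>scale_dorder_mono\<close>, \<open>weight A c D\<close> is the length of the set of
  scales \<open>e \<in> [0, max_margin A c)\<close> with \<open>scale_dorder A c e = D\<close>.\<close>

definition weight :: "'a set \<Rightarrow> ('a \<Rightarrow> real^2) \<Rightarrow> 'a dorder \<Rightarrow> real" where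
  "weight A c D =
     threshold A c D - Max (insert 0 (threshold A c ` {D' \<in> R_plus A. dorder_le D' D \<and> D' \<noteq> D}))"

definition to_nerve :: "'a set \<Rightarrow> ('a \<Rightarrow> real^2) \<Rightarrow> 'a dorder \<Rightarrow> real" where
  "to_nerve A c = normalized_on (R_plus A) (weight A c)"

lemma finite_regular_dorder_rel: "finite A \<Longrightarrow> E \<in> regular_dorders A \<Longrightarrow> finite (dorder_rel E i)"
  by (simp add: finite_dorder_rel regular_dorder_def)

lemma max_margin_le: "max_margin A c \<le> 1/2"
  by (simp add: max_margin_def)

lemma max_margin_nonneg: "finite A \<Longrightarrow> 0 \<le> max_margin A c"
  by (simp add: max_margin_def finite_regular_dorders)

lemma max_margin_pos:
  assumes "finite A" "c \<in> OConf A"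
  shows "0 < max_margin A c"
proof -
  obtain E where E: "regular_dorder A E" "realizes c 0 E"
    using regular_dorder_realized[OF assms] by blast
  then have "0 < margin E c"
    using less_margin_iff[of E 0] finite_regular_dorder_rel[OF assms(1)] by simp
  moreover have "margin E c \<le> Max (insert 0 ((\<lambda>E. margin E c) ` regular_dorders A))"
    using E(1) finite_regular_dorders[OF assms(1)] by (intro Max_ge) auto
  ultimately show ?thesis
    by (simp add: max_margin_def)
qed

lemma scale_dorder_realized:
  assumes "finite A" "0 \<le> e" "e < 1"
  shows "realizes c e (scale_dorder A c e)"
  unfolding scale_dorder_def
  by (rule realizes_dorder_join[OF assms(2)])
     (use less_margin_iff finite_regular_dorder_rel[OF assms(1)] assms(3) in blast)

lemma scale_dorder_in_R_plus:
  assumes fin: "finite A" and e: "0 \<le> e" "e < max_margin A c"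
  shows "scale_dorder A c e \<in> R_plus A"
  unfolding scale_dorder_def
proof (rule dorder_join_in_R_plus)
  have "e < Max (insert 0 ((\<lambda>E. margin E c) ` regular_dorders A))"
    using e(2) by (simp add: max_margin_def)
  then show "{E \<in> regular_dorders A. e < margin E c} \<noteq> {}"
    using e(1) finite_regular_dorders[OF fin] by (auto simp: Max_gr_iff)
  show "finite {E \<in> regular_dorders A. e < margin E c}"
    using finite_regular_dorders[OF fin] by simp
  have "e < 1"
    using e(2) max_margin_le[of A c] by linarith
  then show "realizes c 0 E" if "E \<in> {E \<in> regular_dorders A. e < margin E c}" for E
    using that e(1) less_margin_iff finite_regular_dorder_rel[OF fin] realizes_antimono by blast
qed auto

lemma scale_dorder_mono: "e \<le> e' \<Longrightarrow> dorder_le (scale_dorder A c e) (scale_dorder A c e')"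
  unfolding scale_dorder_def by (rule dorder_join_antimono) auto

lemma finite_threshold_families:
  "finite A \<Longrightarrow> finite {S. S \<subseteq> regular_dorders A \<and> dorder_le (dorder_join S) D}"
  by (rule finite_subset[of _ "Pow (regular_dorders A)"]) (auto simp: finite_regular_dorders)

lemma threshold_nonneg: "finite A \<Longrightarrow> 0 \<le> threshold A c D"
  by (simp add: threshold_def finite_threshold_families)

lemma threshold_le_max_margin:
  assumes "finite A"
  shows "threshold A c D \<le> max_margin A c"
proof -
  have "Min (insert (max_margin A c) ((\<lambda>E. margin E c) ` S)) \<le> max_margin A c" if "S \<subseteq> regular_dorders A" for S
    using that finite_subset[OF _ finite_regular_dorders[OF assms]] by (intro Min_le) auto
  then show ?thesis
    using max_margin_nonneg[OF assms] finite_threshold_families[OF assms]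
    by (auto simp: threshold_def)
qed

lemma less_threshold_iff:
  assumes fin: "finite A" and e: "0 \<le> e" "e < max_margin A c"
  shows "e < threshold A c D \<longleftrightarrow> dorder_le (scale_dorder A c e) D"
proof
  assume "e < threshold A c D"
  then obtain S where S: "S \<subseteq> regular_dorders A" "dorder_le (dorder_join S) D"
      "e < Min (insert (max_margin A c) ((\<lambda>E. margin E c) ` S))"
    using e(1) finite_threshold_families[OF fin] by (auto simp: threshold_def Max_gr_iff)
  then have "S \<subseteq> {E \<in> regular_dorders A. e < margin E c}"
    using finite_subset[OF S(1) finite_regular_dorders[OF fin]] by (auto simp: Min_gr_iff)
  then have "dorder_le (scale_dorder A c e) (dorder_join S)"
    unfolding scale_dorder_def by (rule dorder_join_antimono)
  with S(2) show "dorder_le (scale_dorder A c e) D"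
    using transp_dorder_le by (blast dest: transpD)
next
  assume le: "dorder_le (scale_dorder A c e) D"
  let ?S = "{E \<in> regular_dorders A. e < margin E c}"
  have "e < Min (insert (max_margin A c) ((\<lambda>E. margin E c) ` ?S))"
    using e(2) finite_regular_dorders[OF fin] by (simp add: Min_gr_iff)
  also have "\<dots> \<le> threshold A c D"
    unfolding threshold_def using le finite_threshold_families[OF fin]
    by (intro Max_ge) (auto simp: scale_dorder_def)
  finally show "e < threshold A c D" .
qed

lemma threshold_mono:
  assumes "finite A" "dorder_le D' D"
  shows "threshold A c D' \<le> threshold A c D"
  unfolding threshold_def
proof (rule Max_mono)
  show "insert 0 ((\<lambda>S. Min (insert (max_margin A c) ((\<lambda>E. margin E c) ` S))) `
          {S. S \<subseteq> regular_dorders A \<and> dorder_le (dorder_join S) D'})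
      \<subseteq> insert 0 ((\<lambda>S. Min (insert (max_margin A c) ((\<lambda>E. margin E c) ` S))) `
          {S. S \<subseteq> regular_dorders A \<and> dorder_le (dorder_join S) D})"
    using assms(2) transp_dorder_le by (blast dest: transpD)
qed (simp_all add: finite_threshold_families[OF assms(1)])

lemma weight_nonneg:
  assumes "finite A"
  shows "0 \<le> weight A c D"
proof -
  have "finite {D' \<in> R_plus A. dorder_le D' D \<and> D' \<noteq> D}"
    using finite_R_plus[OF assms] by simp
  then show ?thesis
    using threshold_nonneg[OF assms] threshold_mono[OF assms]
    by (simp add: weight_def)
qed

lemma weight_pos_imp_scale_dorder:
  assumes fin: "finite A" and D: "D \<in> R_plus A" and pos: "0 < weight A c D"
  shows "\<exists>e. 0 \<le> e \<and> e < max_margin A c \<and> scale_dorder A c e = D"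
proof -
  define e where "e = Max (insert 0 (threshold A c ` {D' \<in> R_plus A. dorder_le D' D \<and> D' \<noteq> D}))"
  have fin_above: "finite {D' \<in> R_plus A. dorder_le D' D \<and> D' \<noteq> D}"
    using finite_R_plus[OF fin] by simp
  have e0: "0 \<le> e"
    using fin_above by (simp add: e_def)
  have "e < threshold A c D"
    using pos by (simp add: weight_def e_def)
  then have eT: "e < max_margin A c"
    using threshold_le_max_margin[OF fin] by (rule less_le_trans)
  have le: "dorder_le (scale_dorder A c e) D"
    using less_threshold_iff[OF fin e0 eT] \<open>e < threshold A c D\<close> by simp
  have "scale_dorder A c e = D"
  proof (rule ccontr)
    assume "scale_dorder A c e \<noteq> D"
    with le scale_dorder_in_R_plus[OF fin e0 eT]
    have "threshold A c (scale_dorder A c e) \<le> e"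
      using fin_above by (simp add: e_def)
    moreover have "e < threshold A c (scale_dorder A c e)"
      using less_threshold_iff[OF fin e0 eT] by simp
    ultimately show False
      by simp
  qed
  with e0 eT show ?thesis
    by blast
qed

lemma sum_weight_pos:
  assumes fin: "finite A" and c: "c \<in> OConf A"
  shows "0 < (\<Sum>D\<in>R_plus A. weight A c D)"
proof -
  have T: "0 < max_margin A c"
    by (rule max_margin_pos[OF assms])
  define D\<^sub>0 where "D\<^sub>0 = scale_dorder A c 0"
  have D\<^sub>0: "D\<^sub>0 \<in> R_plus A"
    using scale_dorder_in_R_plus[OF fin order_refl T] by (simp add: D\<^sub>0_def)
  have "threshold A c D' \<le> 0" if "D' \<in> R_plus A" "dorder_le D' D\<^sub>0" "D' \<noteq> D\<^sub>0" for D'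
  proof (rule ccontr)
    assume "\<not> threshold A c D' \<le> 0"
    then have "dorder_le D\<^sub>0 D'"
      using less_threshold_iff[OF fin order_refl T] by (simp add: D\<^sub>0_def not_le)
    with that show False
      using dorder_le_antisym by blast
  qed
  then have "Max (insert 0 (threshold A c ` {D' \<in> R_plus A. dorder_le D' D\<^sub>0 \<and> D' \<noteq> D\<^sub>0})) = 0"
    using finite_R_plus[OF fin] by (intro antisym) auto
  moreover have "0 < threshold A c D\<^sub>0"
    using less_threshold_iff[OF fin order_refl T] by (simp add: D\<^sub>0_def)
  ultimately have "0 < weight A c D\<^sub>0"
    by (simp add: weight_def)
  also have "\<dots> \<le> (\<Sum>D\<in>R_plus A. weight A c D)"
    using D\<^sub>0 finite_R_plus[OF fin] weight_nonneg[OF fin] by (intro member_le_sum) auto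
  finally show ?thesis .
qed

lemma to_nerve_pos_imp_scale_dorder:
  assumes "finite A" "c \<in> OConf A" "0 < to_nerve A c D"
  shows "D \<in> R_plus A" "\<exists>e. 0 \<le> e \<and> e < max_margin A c \<and> scale_dorder A c e = D"
  using assms(3) weight_pos_imp_scale_dorder[OF assms(1)]
  by (simp_all add: to_nerve_def normalized_on_pos_iff[OF sum_weight_pos[OF assms(1,2)]])

lemma to_nerve_in_realization:
  assumes "finite A" "c \<in> OConf A"
  shows "to_nerve A c \<in> realization (R_plus A) dorder_le"
  unfolding to_nerve_def
proof (rule normalized_on_in_realization)
  fix D D'
  assume "D \<in> R_plus A" "D' \<in> R_plus A" "0 < weight A c D" "0 < weight A c D'"
  then obtain e e' where "scale_dorder A c e = D" "scale_dorder A c e' = D'"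
    using weight_pos_imp_scale_dorder[OF assms(1)] by meson
  then show "dorder_le D D' \<or> dorder_le D' D"
    using scale_dorder_mono[of e e'] scale_dorder_mono[of e' e] by (cases "e \<le> e'") auto
qed (simp_all add: weight_nonneg[OF assms(1)] sum_weight_pos[OF assms])

lemma to_nerve_support_realized:
  assumes "finite A" "c \<in> OConf A" "0 < to_nerve A c D"
  shows "realizes c 0 D"
proof -
  obtain e where e: "0 \<le> e" "e < max_margin A c" "scale_dorder A c e = D"
    using to_nerve_pos_imp_scale_dorder[OF assms] by blast
  have "e < 1"
    using e(2) max_margin_le[of A c] by linarith
  with e show ?thesis
    using scale_dorder_realized[OF assms(1) e(1)] realizes_antimono by blast
qed

text \<open>Every regular generator of \<open>D\<close> has margin at least \<open>margin D c\<close>, so it is one of the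
  generators of \<open>scale_dorder A c e\<close> for every \<open>e < max_margin A c\<close>.\<close>

lemma to_nerve_support_le:
  assumes fin: "finite A" and c: "c \<in> OConf A" and D: "D \<in> R_plus A"
    and wide: "max_margin A c < margin D c" and E: "0 < to_nerve A c E"
  shows "dorder_le E D"
proof -
  obtain e where e: "0 \<le> e" "e < max_margin A c" "scale_dorder A c e = E"
    using to_nerve_pos_imp_scale_dorder[OF fin c E] by blast
  obtain F where F: "F \<subseteq> regular_dorders A" "D = dorder_join F"
    using D by (auto simp: R_plus_iff_join)
  have "F \<subseteq> {E \<in> regular_dorders A. e < margin E c}"
  proof
    fix E'
    assume "E' \<in> F"
    then have "margin D c \<le> margin E' c"
      using F(2) dorder_join_le margin_antimono finite_dorder_rel[OF fin R_plus_double_order[OF D]]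
      by blast
    with \<open>E' \<in> F\<close> F(1) e(2) wide show "E' \<in> {E \<in> regular_dorders A. e < margin E c}"
      by auto
  qed
  then have "dorder_le (scale_dorder A c e) (dorder_join F)"
    unfolding scale_dorder_def by (rule dorder_join_antimono)
  with e(3) F(2) show ?thesis
    by simp
qed

lemma continuous_on_max_margin: "finite A \<Longrightarrow> continuous_on S (max_margin A)"
  unfolding max_margin_def[abs_def]
  by (intro continuous_intros continuous_on_Max_insert continuous_on_margin finite_regular_dorders
      finite_regular_dorder_rel) auto

lemma continuous_on_threshold: "finite A \<Longrightarrow> continuous_on S (\<lambda>c. threshold A c D)"
  unfolding threshold_def
  by (intro continuous_intros continuous_on_Max_insert continuous_on_Min_insert continuous_on_max_margin
      continuous_on_margin finite_threshold_families)
     (auto intro: finite_subset[OF _ finite_regular_dorders] finite_regular_dorder_rel)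

lemma continuous_on_weight:
  assumes "finite A"
  shows "continuous_on S (\<lambda>c. weight A c D)"
  unfolding weight_def
  using finite_R_plus[OF assms]
  by (intro continuous_intros continuous_on_Max_insert continuous_on_threshold assms) simp_all

lemma continuous_on_to_nerve: "finite A \<Longrightarrow> continuous_on (OConf A) (to_nerve A)"
  unfolding to_nerve_def
  by (intro continuous_on_normalized_on continuous_on_weight sum_weight_pos)

lemma max_margin_act:
  assumes "\<sigma> permutes A"
  shows "max_margin A (c \<circ> \<sigma>) = max_margin A c"
proof -
  have "(\<lambda>E. margin E (c \<circ> \<sigma>)) ` regular_dorders A
      = (\<lambda>E. margin E (c \<circ> \<sigma>)) ` (\<lambda>E. dorder_act E \<sigma>) ` regular_dorders A"
    by (simp only: dorder_act_image_eq[OF regular_dorders_act assms])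
  also have "\<dots> = (\<lambda>E. margin E c) ` regular_dorders A"
    by (simp add: image_image margin_act[OF permutes_bij[OF assms]])
  finally show ?thesis
    by (simp add: max_margin_def)
qed

lemma scale_dorder_act:
  assumes "\<sigma> permutes A"
  shows "scale_dorder A (c \<circ> \<sigma>) e = dorder_act (scale_dorder A c e) \<sigma>"
proof -
  have "{E \<in> regular_dorders A. e < margin E (c \<circ> \<sigma>)}
      = {E \<in> (\<lambda>E. dorder_act E \<sigma>) ` regular_dorders A. e < margin E (c \<circ> \<sigma>)}"
    by (simp only: dorder_act_image_eq[OF regular_dorders_act assms])
  also have "\<dots> = (\<lambda>E. dorder_act E \<sigma>) ` {E \<in> regular_dorders A. e < margin E c}"
    by (auto simp: margin_act[OF permutes_bij[OF assms]])
  finally show ?thesis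
    by (simp add: scale_dorder_def dorder_join_act[OF permutes_bij[OF assms]])
qed

lemma eq_if_less_iff_below:
  fixes x y T :: real
  assumes "0 \<le> x" "x \<le> T" "0 \<le> y" "y \<le> T" "\<And>e. 0 \<le> e \<Longrightarrow> e < T \<Longrightarrow> e < x \<longleftrightarrow> e < y"
  shows "x = y"
  using assms(5)[of x] assms(5)[of y] assms(1-4) by (cases x y rule: linorder_cases) auto

lemma threshold_act:
  assumes fin: "finite A" and \<sigma>: "\<sigma> permutes A"
  shows "threshold A (c \<circ> \<sigma>) (dorder_act D \<sigma>) = threshold A c D"
proof (rule eq_if_less_iff_below)
  show "0 \<le> threshold A (c \<circ> \<sigma>) (dorder_act D \<sigma>)" "0 \<le> threshold A c D"
    by (simp_all add: threshold_nonneg[OF fin])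
  show "threshold A (c \<circ> \<sigma>) (dorder_act D \<sigma>) \<le> max_margin A c" "threshold A c D \<le> max_margin A c"
    using threshold_le_max_margin[OF fin] max_margin_act[OF \<sigma>] by metis+
  fix e
  assume "0 \<le> e" "e < max_margin A c"
  then show "e < threshold A (c \<circ> \<sigma>) (dorder_act D \<sigma>) \<longleftrightarrow> e < threshold A c D"
    using less_threshold_iff[OF fin] max_margin_act[OF \<sigma>]
    by (simp add: scale_dorder_act[OF \<sigma>] dorder_le_act_iff[OF permutes_surj[OF \<sigma>]])
qed

lemma weight_act:
  assumes fin: "finite A" and \<sigma>: "\<sigma> permutes A"
  shows "weight A (c \<circ> \<sigma>) (dorder_act D \<sigma>) = weight A c D"
proof -
  have bij: "bij \<sigma>"
    by (rule permutes_bij[OF \<sigma>])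
  have "{D' \<in> R_plus A. dorder_le D' (dorder_act D \<sigma>) \<and> D' \<noteq> dorder_act D \<sigma>}
      = {D' \<in> (\<lambda>D. dorder_act D \<sigma>) ` R_plus A. dorder_le D' (dorder_act D \<sigma>) \<and> D' \<noteq> dorder_act D \<sigma>}"
    by (simp only: dorder_act_image_eq[OF R_plus_act \<sigma>])
  also have "\<dots> = (\<lambda>D. dorder_act D \<sigma>) ` {D' \<in> R_plus A. dorder_le D' D \<and> D' \<noteq> D}"
    by (auto simp: dorder_le_act_iff[OF permutes_surj[OF \<sigma>]] dorder_act_inj[OF bij])
  finally show ?thesis
    by (simp add: weight_def image_image threshold_act[OF fin \<sigma>])
qed

lemma to_nerve_act:
  assumes "finite A" "\<sigma> permutes A"
  shows "to_nerve A (c \<circ> \<sigma>) = realization_act (to_nerve A c) \<sigma>"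
  unfolding to_nerve_def
  by (rule normalized_on_R_plus_act[OF assms(2)]) (rule weight_act[OF assms])

section \<open>From the nerve to configurations\<close>

lemma realization_chain: "t \<in> realization P le \<Longrightarrow> 0 < t x \<Longrightarrow> 0 < t y \<Longrightarrow> le x y \<or> le y x"
  unfolding realization_def by blast

lemma realization_greatest_in_support:
  assumes "finite P" "t \<in> realization P le" "transp le"
  shows "\<exists>M\<in>P. 0 < t M \<and> (\<forall>D. 0 < t D \<longrightarrow> le D M)"
proof -
  have t: "\<And>x. 0 \<le> t x" "\<And>x. x \<notin> P \<Longrightarrow> t x = 0" "sum t P = 1"
    using assms(2) by (auto simp: realization_def)
  define K where "K = {D \<in> P. 0 < t D}"
  have "K \<noteq> {}"
  proof
    assume "K = {}"
    then have "\<forall>D\<in>P. t D = 0"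
      using t(1) by (auto simp: K_def less_le)
    with t(3) show False
      by simp
  qed
  moreover have "finite K"
    using assms(1) by (simp add: K_def)
  ultimately obtain M where "M \<in> K" "\<forall>D\<in>K. le D M"
    using finite_chain_has_greatest[OF _ _ assms(3), of K] realization_chain[OF assms(2)]
    by (auto simp: K_def)
  moreover have "D \<in> K" if "0 < t D" for D
    using that t(2) by (force simp: K_def)
  ultimately show ?thesis
    by (auto simp: K_def)
qed

lemma realization_segment:
  assumes t: "t \<in> realization P le" and u: "u \<in> realization P le" and s: "s \<in> {0..1}"
    and chain: "\<And>x y. 0 < t x \<or> 0 < u x \<Longrightarrow> 0 < t y \<or> 0 < u y \<Longrightarrow> le x y \<or> le y x"
  shows "(\<lambda>x. (1 - s) *\<^sub>R t x + s *\<^sub>R u x) \<in> realization P le"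
proof -
  have t': "\<And>x. 0 \<le> t x" "\<And>x. x \<notin> P \<Longrightarrow> t x = 0" "sum t P = 1"
    using t by (auto simp: realization_def)
  have u': "\<And>x. 0 \<le> u x" "\<And>x. x \<notin> P \<Longrightarrow> u x = 0" "sum u P = 1"
    using u by (auto simp: realization_def)
  have pos: "0 < t x \<or> 0 < u x" if "0 < (1 - s) * t x + s * u x" for x
    using that t'(1)[of x] u'(1)[of x] by (cases "t x = 0"; cases "u x = 0") auto
  show ?thesis
    unfolding realization_def
  proof (intro CollectI conjI allI impI)
    fix x
    show "0 \<le> (1 - s) *\<^sub>R t x + s *\<^sub>R u x"
      using t'(1)[of x] u'(1)[of x] s by simp
    show "x \<notin> P \<Longrightarrow> (1 - s) *\<^sub>R t x + s *\<^sub>R u x = 0"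
      using t'(2) u'(2) by simp
  next
    show "(\<Sum>x\<in>P. (1 - s) *\<^sub>R t x + s *\<^sub>R u x) = 1"
      using t'(3) u'(3) by (simp add: sum.distrib sum_distrib_left[symmetric])
  next
    fix x y
    assume "0 < (1 - s) *\<^sub>R t x + s *\<^sub>R u x \<and> 0 < (1 - s) *\<^sub>R t y + s *\<^sub>R u y"
    then show "le x y \<or> le y x"
      using chain pos by simp
  qed
qed

definition vertex_position :: "'a dorder \<Rightarrow> 'a \<Rightarrow> real^2" where
  "vertex_position D a = (\<chi> i. real (card {b. (b, a) \<in> dorder_rel D i}))"

definition to_conf :: "'a set \<Rightarrow> ('a dorder \<Rightarrow> real) \<Rightarrow> 'a \<Rightarrow> real^2" where
  "to_conf A t = (\<lambda>a. \<Sum>D\<in>R_plus A. t D *\<^sub>R vertex_position D a)"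

lemma card_predecessors_less:
  assumes "finite A" "strict_po A r" "(a, b) \<in> r"
  shows "card {x. (x, a) \<in> r} < card {x. (x, b) \<in> r}"
proof (rule psubset_card_mono)
  have r: "r \<subseteq> A \<times> A" "trans r" "(a, a) \<notin> r"
    using assms(2) by (auto simp: strict_po_def)
  show "finite {x. (x, b) \<in> r}"
    using r(1) assms(1) by (auto intro: finite_subset)
  have "{x. (x, a) \<in> r} \<subseteq> {x. (x, b) \<in> r}"
    using r(2) assms(3) by (auto dest: transD)
  moreover have "a \<in> {x. (x, b) \<in> r}" "a \<notin> {x. (x, a) \<in> r}"
    using assms(3) r(3) by auto
  ultimately show "{x. (x, a) \<in> r} \<subset> {x. (x, b) \<in> r}"
    by blast
qed

lemma gap_vertex_position:
  assumes "finite A" "double_order A D" "(a, b) \<in> dorder_rel D i"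
  shows "1 \<le> gap (vertex_position D) i a b"
proof -
  have "card {x. (x, a) \<in> dorder_rel D i} < card {x. (x, b) \<in> dorder_rel D i}"
    by (rule card_predecessors_less[OF assms(1) double_order_strict_po[OF assms(2)] assms(3)])
  then show ?thesis
    by (simp add: gap_def vertex_position_def)
qed

lemma vertex_position_outside:
  assumes "double_order A D" "a \<notin> A"
  shows "vertex_position D a = 0"
proof -
  have "{b. (b, a) \<in> dorder_rel D i} = {}" for i
    using double_order_subset[OF assms(1), of i] assms(2) by auto
  then show ?thesis
    by (simp add: vertex_position_def vec_eq_iff)
qed

lemma gap_to_conf: "gap (to_conf A t) i a b = (\<Sum>D\<in>R_plus A. t D * gap (vertex_position D) i a b)"
  by (simp add: gap_def to_conf_def sum_subtractf[symmetric] right_diff_distrib)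

lemma to_conf_outside: "a \<notin> A \<Longrightarrow> to_conf A t a = 0"
  by (simp add: to_conf_def vertex_position_outside[OF R_plus_double_order])

text \<open>The relations of the greatest vertex \<open>M\<close> of the support are shared by every vertex of the
  support, so each of them is stretched to a gap of at least one.\<close>

lemma to_conf_support_greatest:
  assumes fin: "finite A" and t: "t \<in> realization (R_plus A) dorder_le"
  shows "\<exists>M\<in>R_plus A. 0 < t M \<and> 1 \<le> margin M (to_conf A t) \<and> realizes (to_conf A t) 0 M"
proof -
  obtain M where M: "M \<in> R_plus A" "0 < t M" "\<And>D. 0 < t D \<Longrightarrow> dorder_le D M"
    using realization_greatest_in_support[OF finite_R_plus[OF fin] t transp_dorder_le] by blast
  have t_nonneg: "\<And>D. 0 \<le> t D" and t_sum: "sum t (R_plus A) = 1"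
    using t by (auto simp: realization_def)
  have gap_ge: "1 \<le> gap (to_conf A t) i a b" if ab: "(a, b) \<in> dorder_rel M i" for i a b
  proof -
    have "t D \<le> t D * gap (vertex_position D) i a b" if D: "D \<in> R_plus A" for D
    proof (cases "t D = 0")
      case False
      then have "dorder_le D M"
        using M(3) t_nonneg[of D] by simp
      then have "(a, b) \<in> dorder_rel D i"
        using ab by (auto simp: dorder_le_iff_rel)
      then have "1 \<le> gap (vertex_position D) i a b"
        by (rule gap_vertex_position[OF fin R_plus_double_order[OF D]])
      then show ?thesis
        using t_nonneg[of D] mult_left_mono[of 1 _ "t D"] by simp
    qed simp
    then have "sum t (R_plus A) \<le> (\<Sum>D\<in>R_plus A. t D * gap (vertex_position D) i a b)"
      by (rule sum_mono)
    with t_sum show ?thesis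
      by (simp add: gap_to_conf)
  qed
  have fin_M: "finite (dorder_rel M i)" for i
    by (rule finite_dorder_rel[OF fin R_plus_double_order[OF M(1)]])
  have "1 \<le> margin M (to_conf A t)"
    by (rule margin_ge[OF fin_M]) (simp_all add: gap_ge)
  moreover have "realizes (to_conf A t) 0 M"
    unfolding realizes_def
  proof (intro allI ballI, clarify)
    fix i a b
    assume "(a, b) \<in> dorder_rel M i"
    with gap_ge show "0 < gap (to_conf A t) i a b"
      by fastforce
  qed
  ultimately show ?thesis
    using M by blast
qed

lemma to_conf_in_OConf:
  assumes "finite A" "t \<in> realization (R_plus A) dorder_le"
  shows "to_conf A t \<in> OConf A"
proof -
  obtain M where M: "M \<in> R_plus A" "realizes (to_conf A t) 0 M"
    using to_conf_support_greatest[OF assms] by blast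
  show ?thesis
    by (rule OConf_if_realizes[OF R_plus_double_order[OF M(1)] M(2) to_conf_outside])
qed

lemma continuous_on_to_conf: "continuous_on S (to_conf A)"
  unfolding to_conf_def[abs_def]
  by (intro continuous_on_coordinatewise_then_product continuous_intros
      continuous_on_product_then_coordinatewise[OF continuous_on_id])

lemma vertex_position_act:
  assumes "bij \<sigma>"
  shows "vertex_position (dorder_act D \<sigma>) a = vertex_position D (\<sigma> a)"
proof -
  have preds: "{b. (b, a) \<in> dorder_rel (dorder_act D \<sigma>) i} = \<sigma> -` {b. (b, \<sigma> a) \<in> dorder_rel D i}" for i
    by (auto simp: dorder_rel_act rel_act_def)
  have card: "card (\<sigma> -` X) = card X" for X
    using assms by (simp add: card_vimage_inj bij_is_inj bij_is_surj)
  show ?thesis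
    by (simp only: vertex_position_def preds card)
qed

lemma to_conf_act:
  assumes \<sigma>: "\<sigma> permutes A"
  shows "to_conf A (realization_act t \<sigma>) = to_conf A t \<circ> \<sigma>"
proof
  fix a
  have bij: "bij \<sigma>"
    by (rule permutes_bij[OF \<sigma>])
  have "to_conf A (realization_act t \<sigma>) a = (\<Sum>D\<in>R_plus A. t (dorder_act D (inv \<sigma>)) *\<^sub>R vertex_position D a)"
    by (simp add: to_conf_def realization_act_def)
  also have "\<dots> = (\<Sum>D\<in>R_plus A. t (dorder_act (dorder_act D \<sigma>) (inv \<sigma>)) *\<^sub>R vertex_position (dorder_act D \<sigma>) a)"
    by (rule sum_dorder_act[OF R_plus_act \<sigma>, symmetric])
  also have "\<dots> = (to_conf A t \<circ> \<sigma>) a"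
    by (simp add: to_conf_def dorder_act_inv_cancel[OF bij] vertex_position_act[OF bij])
  finally show "to_conf A (realization_act t \<sigma>) a = (to_conf A t \<circ> \<sigma>) a" .
qed

definition excess_margin :: "'a set \<Rightarrow> 'a dorder \<Rightarrow> ('a \<Rightarrow> real^2) \<Rightarrow> real" where
  "excess_margin A D c = max 0 (margin D c - max_margin A c)"

definition reweight :: "'a set \<Rightarrow> ('a dorder \<Rightarrow> real) \<Rightarrow> 'a dorder \<Rightarrow> real" where
  "reweight A t = normalized_on (R_plus A) (\<lambda>D. t D * excess_margin A D (to_conf A t))"

lemma sum_reweight_pos:
  assumes fin: "finite A" and t: "t \<in> realization (R_plus A) dorder_le"
  shows "0 < (\<Sum>D\<in>R_plus A. t D * excess_margin A D (to_conf A t))"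
proof -
  obtain M where M: "M \<in> R_plus A" "0 < t M" "1 \<le> margin M (to_conf A t)"
    using to_conf_support_greatest[OF assms] by blast
  have t_nonneg: "\<And>D. 0 \<le> t D"
    using t by (auto simp: realization_def)
  have "0 < excess_margin A M (to_conf A t)"
    using M(3) max_margin_le[of A "to_conf A t"] by (simp add: excess_margin_def)
  with M(2) have "0 < t M * excess_margin A M (to_conf A t)"
    by simp
  also have "\<dots> \<le> (\<Sum>D\<in>R_plus A. t D * excess_margin A D (to_conf A t))"
    using M(1) finite_R_plus[OF fin] t_nonneg by (intro member_le_sum) (auto simp: excess_margin_def)
  finally show ?thesis .
qed

lemma reweight_support:
  assumes "finite A" "t \<in> realization (R_plus A) dorder_le" "0 < reweight A t D"
  shows "D \<in> R_plus A" "0 < t D" "max_margin A (to_conf A t) < margin D (to_conf A t)"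
proof -
  have "D \<in> R_plus A" "0 < t D * excess_margin A D (to_conf A t)"
    using assms(3) by (simp_all add: reweight_def normalized_on_pos_iff[OF sum_reweight_pos[OF assms(1,2)]])
  moreover have "0 \<le> t D"
    using assms(2) unfolding realization_def by blast
  ultimately show "D \<in> R_plus A" "0 < t D" "max_margin A (to_conf A t) < margin D (to_conf A t)"
    by (auto simp: excess_margin_def zero_less_mult_iff)
qed

lemma reweight_in_realization:
  assumes "finite A" "t \<in> realization (R_plus A) dorder_le"
  shows "reweight A t \<in> realization (R_plus A) dorder_le"
  unfolding reweight_def
proof (rule normalized_on_in_realization)
  have t_nonneg: "\<And>D. 0 \<le> t D"
    using assms(2) unfolding realization_def by blast
  show "0 \<le> t D * excess_margin A D (to_conf A t)" for D
    using t_nonneg by (simp add: excess_margin_def)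
  show "dorder_le D D' \<or> dorder_le D' D"
    if "0 < t D * excess_margin A D (to_conf A t)" "0 < t D' * excess_margin A D' (to_conf A t)" for D D'
    using that t_nonneg realization_chain[OF assms(2)] by (auto simp: zero_less_mult_iff excess_margin_def)
qed (rule sum_reweight_pos[OF assms])

lemma continuous_on_reweight:
  assumes fin: "finite A"
  shows "continuous_on (realization (R_plus A) dorder_le) (reweight A)"
  unfolding reweight_def
proof (rule continuous_on_normalized_on)
  fix D
  assume "D \<in> R_plus A"
  then have "continuous_on UNIV (margin D)"
    by (intro continuous_on_margin finite_dorder_rel[OF fin R_plus_double_order])
  then show "continuous_on (realization (R_plus A) dorder_le) (\<lambda>t. t D * excess_margin A D (to_conf A t))"
    unfolding excess_margin_def
    by (intro continuous_intros continuous_on_product_then_coordinatewise[OF continuous_on_id]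
        continuous_on_compose2[OF _ continuous_on_to_conf subset_UNIV]
        continuous_on_max_margin[OF fin])
qed (rule sum_reweight_pos[OF fin])

lemma reweight_act:
  assumes fin: "finite A" and \<sigma>: "\<sigma> permutes A"
  shows "reweight A (realization_act t \<sigma>) = realization_act (reweight A t) \<sigma>"
  unfolding reweight_def to_conf_act[OF \<sigma>]
proof (rule normalized_on_R_plus_act[OF \<sigma>])
  fix D
  show "realization_act t \<sigma> (dorder_act D \<sigma>) * excess_margin A (dorder_act D \<sigma>) (to_conf A t \<circ> \<sigma>)
      = t D * excess_margin A D (to_conf A t)"
  proof -
    have "realization_act t \<sigma> (dorder_act D \<sigma>) = t D"
      by (simp add: realization_act_def dorder_act_inv_cancel[OF permutes_bij[OF \<sigma>]])
    moreover have "excess_margin A (dorder_act D \<sigma>) (to_conf A t \<circ> \<sigma>) = excess_margin A D (to_conf A t)"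
      unfolding excess_margin_def margin_act[OF permutes_bij[OF \<sigma>]] max_margin_act[OF \<sigma>] ..
    ultimately show ?thesis
      by simp
  qed
qed

section \<open>The equivariant homotopies\<close>

lemma to_conf_to_nerve_segment:
  assumes fin: "finite A" and c: "c \<in> OConf A" and s: "s \<in> {0..1}"
  shows "(\<lambda>a. (1 - s) *\<^sub>R c a + s *\<^sub>R to_conf A (to_nerve A c) a) \<in> OConf A"
proof -
  obtain M where M: "M \<in> R_plus A" "0 < to_nerve A c M" "realizes (to_conf A (to_nerve A c)) 0 M"
    using to_conf_support_greatest[OF fin to_nerve_in_realization[OF fin c]] by blast
  have "realizes c 0 M"
    by (rule to_nerve_support_realized[OF fin c M(2)])
  then have "realizes (\<lambda>a. (1 - s) *\<^sub>R c a + s *\<^sub>R to_conf A (to_nerve A c) a) 0 M"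
    by (rule realizes_segment[OF _ M(3) s])
  moreover have "(1 - s) *\<^sub>R c a + s *\<^sub>R to_conf A (to_nerve A c) a = 0" if "a \<notin> A" for a
    using c that by (simp add: OConf_def to_conf_outside)
  ultimately show ?thesis
    by (rule OConf_if_realizes[OF R_plus_double_order[OF M(1)]])
qed

lemma reweight_segment:
  assumes fin: "finite A" and t: "t \<in> realization (R_plus A) dorder_le" and s: "s \<in> {0..1}"
  shows "(\<lambda>D. (1 - s) *\<^sub>R t D + s *\<^sub>R reweight A t D) \<in> realization (R_plus A) dorder_le"
  by (rule realization_segment[OF t reweight_in_realization[OF fin t] s])
     (meson realization_chain[OF t] reweight_support(2)[OF fin t])

lemma reweight_to_nerve_segment:
  assumes fin: "finite A" and t: "t \<in> realization (R_plus A) dorder_le" and s: "s \<in> {0..1}"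
  shows "(\<lambda>D. (1 - s) *\<^sub>R reweight A t D + s *\<^sub>R to_nerve A (to_conf A t) D)
           \<in> realization (R_plus A) dorder_le"
proof (rule realization_segment)
  have c: "to_conf A t \<in> OConf A"
    by (rule to_conf_in_OConf[OF fin t])
  show r: "reweight A t \<in> realization (R_plus A) dorder_le"
    by (rule reweight_in_realization[OF fin t])
  show f: "to_nerve A (to_conf A t) \<in> realization (R_plus A) dorder_le"
    by (rule to_nerve_in_realization[OF fin c])
  have mixed: "dorder_le E D" if "0 < reweight A t D" "0 < to_nerve A (to_conf A t) E" for D E
    using to_nerve_support_le[OF fin c reweight_support(1,3)[OF fin t that(1)] that(2)] .
  show "dorder_le x y \<or> dorder_le y x"
    if "0 < reweight A t x \<or> 0 < to_nerve A (to_conf A t) x"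
       "0 < reweight A t y \<or> 0 < to_nerve A (to_conf A t) y" for x y
    using that realization_chain[OF r] realization_chain[OF f] mixed by blast
qed (rule s)

lemma equivariant_to_conf: "equivariant {\<sigma>. \<sigma> permutes A} realization_act conf_act X (to_conf A)"
  by (simp add: equivariant_def conf_act_def to_conf_act)

lemma equivariant_to_nerve:
  "finite A \<Longrightarrow> equivariant {\<sigma>. \<sigma> permutes A} conf_act realization_act X (to_nerve A)"
  by (simp add: equivariant_def conf_act_def to_nerve_act)

lemma realization_act_eq_comp: "realization_act t \<sigma> = t \<circ> (\<lambda>E. dorder_act E (inv \<sigma>))"
  by (simp add: realization_act_def comp_def)

lemma homotopic_id_reweight:
  assumes fin: "finite A"
  shows "homotopic_with
           (equivariant {\<sigma>. \<sigma> permutes A} realization_act realization_act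
              (top_of_set (realization (R_plus A) dorder_le)))
           (top_of_set (realization (R_plus A) dorder_le)) (top_of_set (realization (R_plus A) dorder_le))
           id (reweight A)"
proof (rule homotopic_with_equivariant_segment[OF realization_act_eq_comp])
  show "continuous_on (realization (R_plus A) dorder_le) id"
    by (rule continuous_on_id')
  show "continuous_on (realization (R_plus A) dorder_le) (reweight A)"
    by (rule continuous_on_reweight[OF fin])
  show "equivariant {\<sigma>. \<sigma> permutes A} realization_act realization_act
      (top_of_set (realization (R_plus A) dorder_le)) id"
    by (simp add: equivariant_def)
  show "equivariant {\<sigma>. \<sigma> permutes A} realization_act realization_act
      (top_of_set (realization (R_plus A) dorder_le)) (reweight A)"
    by (simp add: equivariant_def reweight_act[OF fin])
  show "(\<lambda>D. (1 - s) *\<^sub>R id t D + s *\<^sub>R reweight A t D) \<in> realization (R_plus A) dorder_le"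
    if "t \<in> realization (R_plus A) dorder_le" "s \<in> {0..1}" for t s
    using reweight_segment[OF fin that] by simp
qed

lemma homotopic_reweight_to_nerve_to_conf:
  assumes fin: "finite A"
  shows "homotopic_with
           (equivariant {\<sigma>. \<sigma> permutes A} realization_act realization_act
              (top_of_set (realization (R_plus A) dorder_le)))
           (top_of_set (realization (R_plus A) dorder_le)) (top_of_set (realization (R_plus A) dorder_le))
           (reweight A) (to_nerve A \<circ> to_conf A)"
proof (rule homotopic_with_equivariant_segment[OF realization_act_eq_comp])
  show "continuous_on (realization (R_plus A) dorder_le) (reweight A)"
    by (rule continuous_on_reweight[OF fin])
  show "continuous_on (realization (R_plus A) dorder_le) (to_nerve A \<circ> to_conf A)"
    by (rule continuous_on_compose[OF continuous_on_to_conf continuous_on_subset[OF continuous_on_to_nerve[OF fin]]])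
       (auto intro: to_conf_in_OConf[OF fin])
  show "equivariant {\<sigma>. \<sigma> permutes A} realization_act realization_act
      (top_of_set (realization (R_plus A) dorder_le)) (reweight A)"
    by (simp add: equivariant_def reweight_act[OF fin])
  show "equivariant {\<sigma>. \<sigma> permutes A} realization_act realization_act
      (top_of_set (realization (R_plus A) dorder_le)) (to_nerve A \<circ> to_conf A)"
    by (simp add: equivariant_def to_conf_act to_nerve_act[OF fin])
  show "(\<lambda>D. (1 - s) *\<^sub>R reweight A t D + s *\<^sub>R (to_nerve A \<circ> to_conf A) t D)
      \<in> realization (R_plus A) dorder_le"
    if "t \<in> realization (R_plus A) dorder_le" "s \<in> {0..1}" for t s
    using reweight_to_nerve_segment[OF fin that] by simp
qed

lemma homotopic_id_to_conf_to_nerve: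
  assumes fin: "finite A"
  shows "homotopic_with (equivariant {\<sigma>. \<sigma> permutes A} conf_act conf_act (top_of_set (OConf A)))
           (top_of_set (OConf A)) (top_of_set (OConf A)) id (to_conf A \<circ> to_nerve A)"
proof (rule homotopic_with_equivariant_segment[OF conf_act_def])
  show "continuous_on (OConf A) id"
    by (rule continuous_on_id')
  show "continuous_on (OConf A) (to_conf A \<circ> to_nerve A)"
    by (rule continuous_on_compose[OF continuous_on_to_nerve[OF fin] continuous_on_to_conf])
  show "equivariant {\<sigma>. \<sigma> permutes A} conf_act conf_act (top_of_set (OConf A)) id"
    by (simp add: equivariant_def)
  show "equivariant {\<sigma>. \<sigma> permutes A} conf_act conf_act (top_of_set (OConf A)) (to_conf A \<circ> to_nerve A)"
    by (simp add: equivariant_def conf_act_def to_conf_act to_nerve_act[OF fin])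
  show "(\<lambda>a. (1 - s) *\<^sub>R id c a + s *\<^sub>R (to_conf A \<circ> to_nerve A) c a) \<in> OConf A"
    if "c \<in> OConf A" "s \<in> {0..1}" for c s
    using to_conf_to_nerve_segment[OF fin that] by simp
qed

theorem proposition5p7:
  fixes A :: "'a set"
  assumes "finite A"
  shows "G_homotopy_equivalent {\<sigma>. \<sigma> permutes A} realization_act conf_act
           (top_of_set (realization (R_plus A) dorder_le)) (top_of_set (OConf A))"
  unfolding G_homotopy_equivalent_def
proof (intro exI conjI)
  show "continuous_map (top_of_set (realization (R_plus A) dorder_le)) (top_of_set (OConf A)) (to_conf A)"
    using continuous_on_to_conf to_conf_in_OConf[OF assms] by auto
  show "continuous_map (top_of_set (OConf A)) (top_of_set (realization (R_plus A) dorder_le)) (to_nerve A)"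
    using continuous_on_to_nerve[OF assms] to_nerve_in_realization[OF assms] by auto
  show "homotopic_with (equivariant {\<sigma>. \<sigma> permutes A} realization_act realization_act
      (top_of_set (realization (R_plus A) dorder_le)))
      (top_of_set (realization (R_plus A) dorder_le)) (top_of_set (realization (R_plus A) dorder_le))
      (to_nerve A \<circ> to_conf A) id"
    using homotopic_with_trans[OF homotopic_id_reweight homotopic_reweight_to_nerve_to_conf, OF assms assms]
    by (rule homotopic_with_symD)
  show "homotopic_with (equivariant {\<sigma>. \<sigma> permutes A} conf_act conf_act (top_of_set (OConf A)))
      (top_of_set (OConf A)) (top_of_set (OConf A)) (to_conf A \<circ> to_nerve A) id"
    using homotopic_id_to_conf_to_nerve[OF assms] by (rule homotopic_with_symD)
qed (simp_all add: equivariant_to_conf equivariant_to_nerve[OF assms])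

end
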